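(* Let $\mathcal{F}$ be a saturated fusion system on a $p$-group $S$ of nilpotency class two, and let $E$ be an essential subgroup of $\mathcal{F}$. Then $E\trianglelefteq S$, $[O^{p'}(\mathrm{Aut}_{\mathcal{F}}(E)),E]\le Z(E)$, and $E=C_S(Z(E))$.
   Context: $E\le S$ is essential in $\mathcal{F}$ if $E$ is $\mathcal{F}$-centric ($C_S(E\varphi)\le E\varphi$ for all $\varphi\in\mathrm{Hom}_{\mathcal{F}}(E,S)$), fully normalized, and $\mathrm{Out}_{\mathcal{F}}(E)=\mathrm{Aut}_{\mathcal{F}}(E)/\mathrm{Inn}(E)$ has a strongly $p$-embedded subgroup. *)

theory Defs
  imports "HOL-Algebra.Algebra" "HOL-Computational_Algebra.Primes"
begin

text \<open>Conjugation map c_g restricted to P, written on the right: x c_g = g^-1 x g.\<close>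
definition cmap :: "('a,'b) monoid_scheme \<Rightarrow> 'a \<Rightarrow> 'a set \<Rightarrow> ('a \<Rightarrow> 'a)" where
  "cmap G g P = (\<lambda>x\<in>P. inv\<^bsub>G\<^esub> g \<otimes>\<^bsub>G\<^esub> x \<otimes>\<^bsub>G\<^esub> g)"

definition centraliser :: "('a,'b) monoid_scheme \<Rightarrow> 'a set \<Rightarrow> 'a set" where
  "centraliser G A = {g \<in> carrier G. \<forall>x\<in>A. g \<otimes>\<^bsub>G\<^esub> x = x \<otimes>\<^bsub>G\<^esub> g}"

definition normaliser :: "('a,'b) monoid_scheme \<Rightarrow> 'a set \<Rightarrow> 'a set" where
  "normaliser G P = {g \<in> carrier G. inv\<^bsub>G\<^esub> g <#\<^bsub>G\<^esub> P #>\<^bsub>G\<^esub> g = P}"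

definition centre :: "('a,'b) monoid_scheme \<Rightarrow> 'a set \<Rightarrow> 'a set" where
  "centre G P = {x \<in> P. \<forall>y\<in>P. x \<otimes>\<^bsub>G\<^esub> y = y \<otimes>\<^bsub>G\<^esub> x}"

definition p_group :: "nat \<Rightarrow> ('a,'b) monoid_scheme \<Rightarrow> bool" where
  "p_group p G \<longleftrightarrow> group G \<and> finite (carrier G) \<and> (\<exists>n. card (carrier G) = p ^ n)"

text \<open>Lower central series: gamma_1 = G (index 0), gamma_{i+1} = [gamma_i, G].\<close>
fun lower_central :: "('a,'b) monoid_scheme \<Rightarrow> nat \<Rightarrow> 'a set" where
  "lower_central G 0 = carrier G"
| "lower_central G (Suc n) = generate G
     {x \<otimes>\<^bsub>G\<^esub> y \<otimes>\<^bsub>G\<^esub> inv\<^bsub>G\<^esub> x \<otimes>\<^bsub>G\<^esub> inv\<^bsub>G\<^esub> y | x y. x \<in> lower_central G n \<and> y \<in> carrier G}"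

definition nilpotency_class :: "('a,'b) monoid_scheme \<Rightarrow> nat \<Rightarrow> bool" where
  "nilpotency_class G c \<longleftrightarrow> lower_central G c = {\<one>\<^bsub>G\<^esub>} \<and> (\<forall>k<c. lower_central G k \<noteq> {\<one>\<^bsub>G\<^esub>})"

definition sylow_subgroup :: "nat \<Rightarrow> ('a,'b) monoid_scheme \<Rightarrow> 'a set \<Rightarrow> bool" where
  "sylow_subgroup p G Q \<longleftrightarrow> subgroup Q G \<and> card Q = p ^ multiplicity p (order G)"

definition O_p'_upper :: "nat \<Rightarrow> ('a,'b) monoid_scheme \<Rightarrow> 'a set" where
  "O_p'_upper p G = \<Inter>{N. N \<lhd> G \<and> \<not> p dvd (card (carrier G) div card N)}"

definition strongly_p_embedded :: "nat \<Rightarrow> ('a,'b) monoid_scheme \<Rightarrow> 'a set \<Rightarrow> bool" where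
  "strongly_p_embedded p G H \<longleftrightarrow> subgroup H G \<and> H \<noteq> carrier G \<and> p dvd card H \<and>
     (\<forall>g \<in> carrier G - H. \<not> p dvd card (H \<inter> (g <#\<^bsub>G\<^esub> H #>\<^bsub>G\<^esub> inv\<^bsub>G\<^esub> g)))"

definition has_strongly_p_embedded :: "nat \<Rightarrow> ('a,'b) monoid_scheme \<Rightarrow> bool" where
  "has_strongly_p_embedded p G \<longleftrightarrow> (\<exists>H. strongly_p_embedded p G H)"

text \<open>A fusion system on S is given by F P Q = Hom_F(P,Q), a set of maps P -> Q
  (extensional functions on P).\<close>
type_synonym 'a fusion = "'a set \<Rightarrow> 'a set \<Rightarrow> ('a \<Rightarrow> 'a) set"

definition hom_S :: "('a,'b) monoid_scheme \<Rightarrow> 'a set \<Rightarrow> 'a set \<Rightarrow> ('a \<Rightarrow> 'a) set" where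
  "hom_S G P Q = {cmap G g P | g. g \<in> carrier G \<and> cmap G g P ` P \<subseteq> Q}"

definition aut_S :: "('a,'b) monoid_scheme \<Rightarrow> 'a set \<Rightarrow> ('a \<Rightarrow> 'a) set" where
  "aut_S G P = hom_S G P P"

definition inn :: "('a,'b) monoid_scheme \<Rightarrow> 'a set \<Rightarrow> ('a \<Rightarrow> 'a) set" where
  "inn G P = {cmap G g P | g. g \<in> P}"

definition inj_maps :: "('a,'b) monoid_scheme \<Rightarrow> 'a set \<Rightarrow> 'a set \<Rightarrow> ('a \<Rightarrow> 'a) set" where
  "inj_maps G P Q = {\<phi>. \<phi> \<in> extensional P \<and> \<phi> \<in> hom (G\<lparr>carrier := P\<rparr>) (G\<lparr>carrier := Q\<rparr>)
                        \<and> inj_on \<phi> P}"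

definition fusion_system :: "('a,'b) monoid_scheme \<Rightarrow> 'a fusion \<Rightarrow> bool" where
  "fusion_system G F \<longleftrightarrow>
     (\<forall>P Q. subgroup P G \<and> subgroup Q G \<longrightarrow> hom_S G P Q \<subseteq> F P Q \<and> F P Q \<subseteq> inj_maps G P Q) \<and>
     (\<forall>P Q R \<phi> \<psi>. subgroup P G \<and> subgroup Q G \<and> subgroup R G \<and> \<phi> \<in> F P Q \<and> \<psi> \<in> F Q R
        \<longrightarrow> compose P \<psi> \<phi> \<in> F P R) \<and>
     (\<forall>P Q \<phi>. subgroup P G \<and> subgroup Q G \<and> \<phi> \<in> F P Q \<longrightarrow>
        \<phi> \<in> F P (\<phi> ` P) \<and> restrict (inv_into P \<phi>) (\<phi> ` P) \<in> F (\<phi> ` P) P)"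

definition aut_F :: "'a fusion \<Rightarrow> 'a set \<Rightarrow> ('a \<Rightarrow> 'a) monoid" where
  "aut_F F P = (BijGroup P)\<lparr>carrier := F P P\<rparr>"

definition out_F :: "('a,'b) monoid_scheme \<Rightarrow> 'a fusion \<Rightarrow> 'a set \<Rightarrow> ('a \<Rightarrow> 'a) set monoid" where
  "out_F G F P = aut_F F P Mod inn G P"

definition F_conjugates :: "('a,'b) monoid_scheme \<Rightarrow> 'a fusion \<Rightarrow> 'a set \<Rightarrow> 'a set set" where
  "F_conjugates G F P = {\<phi> ` P | \<phi>. \<phi> \<in> F P (carrier G)}"

definition fully_normalized :: "('a,'b) monoid_scheme \<Rightarrow> 'a fusion \<Rightarrow> 'a set \<Rightarrow> bool" where
  "fully_normalized G F P \<longleftrightarrow>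
     (\<forall>Q \<in> F_conjugates G F P. card (normaliser G Q) \<le> card (normaliser G P))"

definition fully_centralized :: "('a,'b) monoid_scheme \<Rightarrow> 'a fusion \<Rightarrow> 'a set \<Rightarrow> bool" where
  "fully_centralized G F P \<longleftrightarrow>
     (\<forall>Q \<in> F_conjugates G F P. card (centraliser G Q) \<le> card (centraliser G P))"

text \<open>N_phi = { g in N_S(P) | phi^-1 c_g phi in Aut_S(P phi) } (right actions).\<close>
definition N_phi :: "('a,'b) monoid_scheme \<Rightarrow> 'a set \<Rightarrow> ('a \<Rightarrow> 'a) \<Rightarrow> 'a set" where
  "N_phi G P \<phi> = {g \<in> normaliser G P.
      compose (\<phi> ` P) (compose P \<phi> (cmap G g P)) (restrict (inv_into P \<phi>) (\<phi> ` P))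
        \<in> aut_S G (\<phi> ` P)}"

text \<open>Saturation (Broto-Levi-Oliver / Aschbacher-Kessar-Oliver Def. I.2.2).\<close>
definition saturated :: "nat \<Rightarrow> ('a,'b) monoid_scheme \<Rightarrow> 'a fusion \<Rightarrow> bool" where
  "saturated p G F \<longleftrightarrow> fusion_system G F \<and>
     (\<forall>P. subgroup P G \<and> fully_normalized G F P \<longrightarrow>
        fully_centralized G F P \<and> sylow_subgroup p (aut_F F P) (aut_S G P)) \<and>
     (\<forall>P \<phi>. subgroup P G \<and> \<phi> \<in> F P (carrier G) \<and> fully_centralized G F (\<phi> ` P) \<longrightarrow>
        (\<exists>\<psi> \<in> F (N_phi G P \<phi>) (carrier G). \<forall>x\<in>P. \<psi> x = \<phi> x))"

definition F_centric :: "('a,'b) monoid_scheme \<Rightarrow> 'a fusion \<Rightarrow> 'a set \<Rightarrow> bool" where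
  "F_centric G F E \<longleftrightarrow> (\<forall>\<phi> \<in> F E (carrier G). centraliser G (\<phi> ` E) \<subseteq> \<phi> ` E)"

definition essential :: "nat \<Rightarrow> ('a,'b) monoid_scheme \<Rightarrow> 'a fusion \<Rightarrow> 'a set \<Rightarrow> bool" where
  "essential p G F E \<longleftrightarrow> subgroup E G \<and> F_centric G F E \<and> fully_normalized G F E \<and>
     has_strongly_p_embedded p (out_F G F E)"

definition action_commutator :: "('a,'b) monoid_scheme \<Rightarrow> ('a \<Rightarrow> 'a) set \<Rightarrow> 'a set \<Rightarrow> 'a set" where
  "action_commutator G A E = generate (G\<lparr>carrier := E\<rparr>)
     {inv\<^bsub>G\<^esub> x \<otimes>\<^bsub>G\<^esub> \<alpha> x | \<alpha> x. \<alpha> \<in> A \<and> x \<in> E}"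

end

(*
  Since S has class two, every commutator of S is central in S, hence lies in C_S(E) <= E.
  So E contains [S,S] and is normal, and conjugation by g in S moves x in E by the commutator
  [x^-1, g^-1], an element of Z(E). Thus Aut_S(E), a Sylow p-subgroup of Aut_F(E) by saturation,
  lies in the normal subgroup K of central automorphisms (those with x^-1 (x alpha) in Z(E)); K has
  p'-index, so it contains O^p'(Aut_F(E)).

  The automorphisms in K that fix Z(E) form a normal p-subgroup of Aut_F(E), as
  alpha |-> (x |-> x^-1 (x alpha)) embeds them into the group of maps E -> Z(E). Its image in
  Out_F(E) is a normal p-subgroup, hence trivial because Out_F(E) has a strongly p-embedded
  subgroup. For s in C_S(Z(E)), conjugation by s is such an automorphism, so it is inner,
  induced by some e in E; then s e^-1 lies in C_S(E) <= E, whence s is in E.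
*)

theory Submission
  imports Defs "HOL-Algebra.Product_Groups"
begin

(* The ASCII multiset syntax "<#" would clash with left cosets. *)
no_notation (ASCII) subset_mset (infix \<open><#\<close> 50)

section \<open>Counting arguments with p-subgroups\<close>

lemma (in group) inv_mult_cancel_left [simp]:
  "x \<in> carrier G \<Longrightarrow> y \<in> carrier G \<Longrightarrow> inv x \<otimes> (x \<otimes> y) = y"
  by (simp add: m_assoc[symmetric])

lemma (in group) mult_inv_cancel_left [simp]:
  "x \<in> carrier G \<Longrightarrow> y \<in> carrier G \<Longrightarrow> x \<otimes> (inv x \<otimes> y) = y"
  by (simp add: m_assoc[symmetric])

lemma (in group) card_subgroup_dvd:
  assumes "subgroup H G" and "subgroup K G" and "H \<subseteq> K"
  shows "card H dvd card K"
proof -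
  interpret K: group "G\<lparr>carrier := K\<rparr>" using subgroup_imp_group[OF assms(2)] .
  have "card (rcosets\<^bsub>G\<lparr>carrier := K\<rparr>\<^esub> H) * card H = card K"
    using K.lagrange[OF subgroup_incl[OF assms]] by (simp add: order_def)
  then show ?thesis by (metis dvd_triv_right)
qed

lemma (in group_hom) card_image_dvd_order: "card (h ` carrier G) dvd order G"
proof -
  let ?I = "H\<lparr>carrier := h ` carrier G\<rparr>"
  have "group_hom G ?I h"
    unfolding group_hom_def group_hom_axioms_def
    using G.is_group H.subgroup_imp_group[OF img_is_subgroup] by (auto simp: hom_def)
  then interpret I: group_hom G ?I h .
  have "G Mod kernel G ?I h \<cong> ?I" by (rule I.FactGroup_iso) simp
  then have "card (rcosets kernel G ?I h) = card (h ` carrier G)"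
    using iso_same_card by (fastforce simp: FactGroup_def)
  moreover have "card (rcosets kernel G ?I h) * card (kernel G ?I h) = order G"
    using G.lagrange[OF I.subgroup_kernel] .
  ultimately show ?thesis by (metis dvd_triv_left)
qed

lemma (in group_hom) card_image_subgroup_dvd:
  assumes K: "subgroup K G"
  shows "card (h ` K) dvd card K"
proof -
  have "group_hom (G\<lparr>carrier := K\<rparr>) H h"
    unfolding group_hom_def group_hom_axioms_def
    using G.subgroup_imp_group[OF K] H.is_group subgroup.mem_carrier[OF K] by (auto simp: hom_def)
  then show ?thesis using group_hom.card_image_dvd_order by (fastforce simp: order_def)
qed

lemma (in group) left_mult_action:
  assumes K: "subgroup K G" and W: "W \<subseteq> Pow (carrier G)"
    and closed: "\<And>k A. k \<in> K \<Longrightarrow> A \<in> W \<Longrightarrow> k <# A \<in> W"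
  shows "group_action (G\<lparr>carrier := K\<rparr>) W (\<lambda>k. \<lambda>A\<in>W. k <# A)"
proof -
  have Kc: "k \<in> carrier G" if "k \<in> K" for k using that subgroup.mem_carrier[OF K] by blast
  have cancel: "inv k <# (k <# A) = A" if "k \<in> K" "A \<in> W" for k A
    using that W Kc by (auto simp: lcos_m_assoc lcos_mult_one)
  have bij: "(\<lambda>A\<in>W. k <# A) \<in> Bij W" if k: "k \<in> K" for k
  proof -
    have "inj_on (\<lambda>A. k <# A) W" by (rule inj_onI) (metis cancel k)
    moreover have "W \<subseteq> (\<lambda>A. k <# A) ` W"
    proof
      fix A assume "A \<in> W"
      then have "inv k <# A \<in> W" and "k <# (inv k <# A) = A"
        using closed cancel[of "inv k"] subgroup.m_inv_closed[OF K k] Kc[OF k] by auto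
      then show "A \<in> (\<lambda>A. k <# A) ` W" by (metis image_eqI)
    qed
    ultimately show ?thesis
      using closed[OF k] by (auto simp: Bij_def bij_betw_def inj_on_def)
  qed
  show ?thesis
    unfolding group_action_def group_hom_def group_hom_axioms_def
  proof (intro conjI homI)
    show "group (G\<lparr>carrier := K\<rparr>)" by (rule subgroup_imp_group[OF K])
    show "group (BijGroup W)" by (rule group_BijGroup)
    show "(\<lambda>A\<in>W. k <# A) \<in> carrier (BijGroup W)" if "k \<in> carrier (G\<lparr>carrier := K\<rparr>)" for k
      using bij that by (simp add: BijGroup_def)
    fix k l assume k: "k \<in> carrier (G\<lparr>carrier := K\<rparr>)" and l: "l \<in> carrier (G\<lparr>carrier := K\<rparr>)"
    have "(\<lambda>A\<in>W. (k \<otimes> l) <# A) = compose W (\<lambda>A\<in>W. k <# A) (\<lambda>A\<in>W. l <# A)"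
      using k l W closed Kc by (auto simp: compose_def lcos_m_assoc intro!: restrict_ext)
    then show "(\<lambda>A\<in>W. (k \<otimes>\<^bsub>G\<lparr>carrier := K\<rparr>\<^esub> l) <# A)
        = (\<lambda>A\<in>W. k <# A) \<otimes>\<^bsub>BijGroup W\<^esub> (\<lambda>A\<in>W. l <# A)"
      using bij k l by (simp add: BijGroup_def)
  qed
qed

lemma (in group_action) p_dvd_card_orbit:
  assumes p: "Factorial_Ring.prime p" and ord: "order G = p ^ a"
    and x: "x \<in> E" and g: "g \<in> carrier G" "\<phi> g x \<noteq> x"
  shows "p dvd card (orbit G \<phi> x)"
proof -
  have "card (orbit G \<phi> x) dvd p ^ a"
    using orbit_stabilizer_theorem[OF x] ord by (metis dvd_triv_left)
  then obtain i where i: "card (orbit G \<phi> x) = p ^ i" using divides_primepow_nat[OF p] by blast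
  have "{x, \<phi> g x} \<subseteq> orbit G \<phi> x" using orbit_refl[OF x] g(1) by (auto simp: orbit_def)
  then have "card (orbit G \<phi> x) \<noteq> 1"
    using g(2) by (metis card_1_singletonE insert_subset singletonD)
  then show ?thesis using i by (cases i) auto
qed

lemma (in group_action) card_fixed_points_cong:
  assumes fin: "finite E" and p: "Factorial_Ring.prime p" and ord: "order G = p ^ a"
  shows "card E mod p = card {x \<in> E. \<forall>g\<in>carrier G. \<phi> g x = x} mod p"
proof -
  define Fix where "Fix = {x \<in> E. \<forall>g\<in>carrier G. \<phi> g x = x}"
  have orbit_E: "orbit G \<phi> x \<subseteq> E" if "x \<in> E" for x
    using that element_image by (auto simp: orbit_def)
  have same_orbit: "orbit G \<phi> z = orbit G \<phi> x" if "z \<in> orbit G \<phi> x" "x \<in> E" for x z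
    using that orbit_E orbit_sym orbit_trans by (meson subset_antisym subsetD subsetI)
  have orbit_moved: "orbit G \<phi> x \<subseteq> E - Fix" if x: "x \<in> E - Fix" for x
  proof
    fix y assume y: "y \<in> orbit G \<phi> x"
    show "y \<in> E - Fix"
    proof
      show "y \<in> E" using y x orbit_E by blast
      show "y \<notin> Fix"
      proof
        assume y_fixed: "y \<in> Fix"
        then have "orbit G \<phi> y = {y}" using orbit_refl[of y] by (auto simp: Fix_def orbit_def)
        moreover have "x \<in> orbit G \<phi> y" using same_orbit[OF y] orbit_refl x by blast
        ultimately show False using x y_fixed by auto
      qed
    qed
  qed
  have "E - Fix = \<Union> {orbit G \<phi> x | x. x \<in> E - Fix}"
    using orbit_moved orbit_refl by blast
  moreover have "p dvd card (\<Union> {orbit G \<phi> x | x. x \<in> E - Fix})"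
  proof (rule dvd_partition)
    show "finite (\<Union> {orbit G \<phi> x | x. x \<in> E - Fix})"
      using fin calculation by (metis finite_Diff)
    show "\<forall>c\<in>{orbit G \<phi> x | x. x \<in> E - Fix}. p dvd card c"
      using p_dvd_card_orbit[OF p ord] by (auto simp: Fix_def)
    show "\<forall>c1\<in>{orbit G \<phi> x | x. x \<in> E - Fix}. \<forall>c2\<in>{orbit G \<phi> x | x. x \<in> E - Fix}.
        c1 \<noteq> c2 \<longrightarrow> c1 \<inter> c2 = {}"
      using same_orbit by blast
  qed
  ultimately have "p dvd card (E - Fix)" by metis
  moreover have "card E = card Fix + card (E - Fix)"
    using fin card_Un_disjoint[of Fix "E - Fix"] by (simp add: Fix_def Un_absorb1)
  ultimately show ?thesis unfolding Fix_def by (auto elim!: dvdE)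
qed

lemma (in group) card_coset_orbit_dvd:
  assumes K: "subgroup K G" and H: "H \<subseteq> carrier G"
  shows "card ((\<lambda>k. k <# H) ` K) dvd card K"
proof -
  define W where "W = (\<lambda>k. k <# H) ` K"
  have Kc: "k \<in> carrier G" if "k \<in> K" for k using that subgroup.mem_carrier[OF K] by blast
  interpret act: group_action "G\<lparr>carrier := K\<rparr>" W "\<lambda>k. \<lambda>A\<in>W. k <# A"
  proof (rule left_mult_action[OF K])
    show "W \<subseteq> Pow (carrier G)" unfolding W_def using H Kc l_coset_subset_G by blast
    show "k <# A \<in> W" if k: "k \<in> K" and A: "A \<in> W" for k A
    proof -
      obtain k' where k': "k' \<in> K" "A = k' <# H" using A unfolding W_def by blast
      then have "k <# A = (k \<otimes> k') <# H" using lcos_m_assoc[OF H Kc[OF k] Kc[OF k'(1)]] by simp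
      then show ?thesis unfolding W_def using subgroup.m_closed[OF K k k'(1)] by blast
    qed
  qed
  have "\<one> <# H \<in> W" unfolding W_def using subgroup.one_closed[OF K] by blast
  then have HW: "H \<in> W" using lcos_mult_one[OF H] by simp
  have "orbit (G\<lparr>carrier := K\<rparr>) (\<lambda>k. \<lambda>A\<in>W. k <# A) H = {k <# H | k. k \<in> K}"
    using HW by (simp add: orbit_def)
  then have "card W * card (stabilizer (G\<lparr>carrier := K\<rparr>) (\<lambda>k. \<lambda>A\<in>W. k <# A) H) = card K"
    using act.orbit_stabilizer_theorem[OF HW] by (simp add: order_def W_def Setcompr_eq_image)
  then show ?thesis unfolding W_def by (metis dvd_triv_left)
qed

lemma (in group) subset_conjugate_if_fixes_coset:
  assumes H: "subgroup H G" and n: "n \<in> carrier G" and P: "P \<subseteq> carrier G"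
    and stable: "\<And>x. x \<in> P \<Longrightarrow> x <# (n <# H) = n <# H"
  shows "P \<subseteq> n <# H #> inv n"
proof
  fix x assume x: "x \<in> P"
  have "x \<otimes> n \<in> x <# (n <# H)"
    using lcos_self[OF n H] unfolding l_coset_def by blast
  then obtain h where h: "h \<in> H" "x \<otimes> n = n \<otimes> h"
    using stable[OF x] by (auto simp: l_coset_def)
  have "x = x \<otimes> n \<otimes> inv n" using x P n by (auto simp: m_assoc)
  also have "\<dots> = n \<otimes> h \<otimes> inv n" using h(2) by simp
  finally show "x \<in> n <# H #> inv n" using h(1) by (auto simp: l_coset_def r_coset_def)
qed

lemma (in group) subgroup_of_prime_order:
  assumes fin: "finite (carrier G)" and p: "Factorial_Ring.prime p"
    and H: "subgroup H G" and p_dvd: "p dvd card H"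
  obtains P where "subgroup P G" and "P \<subseteq> H" and "card P = p"
proof -
  have "order (G\<lparr>carrier := H\<rparr>) = p ^ 1 * (card H div p)" using p_dvd by (simp add: order_def)
  moreover have "finite (carrier (G\<lparr>carrier := H\<rparr>))"
    using fin subgroup.subset[OF H] finite_subset by auto
  ultimately obtain P where P: "subgroup P (G\<lparr>carrier := H\<rparr>)" "card P = p ^ 1"
    using sylow_thm[OF p subgroup_imp_group[OF H]] by blast
  show ?thesis
  proof (rule that)
    show "subgroup P G" by (rule incl_subgroup[OF H P(1)])
    show "P \<subseteq> H" using subgroup.subset[OF P(1)] by simp
    show "card P = p" using P(2) by simp
  qed
qed

lemma (in group) translate_of_translate_mem:
  assumes H: "subgroup H G" and N: "N \<lhd> G" and x: "x \<in> H" and n: "n \<in> N"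
  shows "x <# (n <# H) \<in> (\<lambda>n. n <# H) ` N"
proof -
  interpret N: normal N G by (rule N)
  have Hc: "H \<subseteq> carrier G" by (rule subgroup.subset[OF H])
  have xc: "x \<in> carrier G" and nc: "n \<in> carrier G"
    using subgroup.mem_carrier[OF H x] N.mem_carrier[OF n] .
  have "(x \<otimes> n \<otimes> inv x) <# H = (x \<otimes> n \<otimes> inv x) <# (x <# H)" using coset_join3[OF xc H x] by simp
  also have "\<dots> = x <# (n <# H)"
    using lcos_m_assoc[OF Hc _ xc, of "x \<otimes> n \<otimes> inv x"] lcos_m_assoc[OF Hc xc nc] xc nc
    by (simp add: m_assoc)
  finally show ?thesis by (rule rev_image_eqI[OF N.inv_op_closed2[OF xc n] sym])
qed

lemma (in group) p_subgroup_fixes_another_coset: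
  assumes fin: "finite (carrier G)" and p: "Factorial_Ring.prime p"
    and H: "subgroup H G" and N: "N \<lhd> G"
    and P: "subgroup P G" "P \<subseteq> H" "card P = p"
    and p_dvd: "p dvd card ((\<lambda>n. n <# H) ` N)"
  obtains n where "n \<in> N" and "n \<notin> H" and "\<And>x. x \<in> P \<Longrightarrow> x <# (n <# H) = n <# H"
proof -
  interpret N: normal N G by (rule N)
  define W where "W = (\<lambda>n. n <# H) ` N"
  have Hc: "H \<subseteq> carrier G" by (rule subgroup.subset[OF H])
  have Pc: "x \<in> carrier G" if "x \<in> P" for x using that subgroup.mem_carrier[OF P(1)] by blast
  have PH: "x <# H = H" if "x \<in> P" for x using coset_join3[OF Pc[OF that] H] P(2) that by blast
  interpret act: group_action "G\<lparr>carrier := P\<rparr>" W "\<lambda>x. \<lambda>A\<in>W. x <# A"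
  proof (rule left_mult_action[OF P(1)])
    show "W \<subseteq> Pow (carrier G)" unfolding W_def using Hc N.mem_carrier l_coset_subset_G by blast
    show "x <# A \<in> W" if "x \<in> P" and "A \<in> W" for x A
      using that P(2) translate_of_translate_mem[OF H N] unfolding W_def by blast
  qed
  define Fix where "Fix = {A \<in> W. \<forall>x\<in>carrier (G\<lparr>carrier := P\<rparr>). (\<lambda>A\<in>W. x <# A) A = A}"
  have "finite W" unfolding W_def using fin N.subset finite_subset by blast
  then have "card W mod p = card Fix mod p" unfolding Fix_def
    using act.card_fixed_points_cong[OF _ p, of 1] P(3) by (simp add: order_def)
  then have p_dvd_Fix: "p dvd card Fix" using p_dvd by (simp add: W_def mod_eq_0_iff_dvd[symmetric])
  have "\<one> <# H \<in> W" unfolding W_def using N.one_closed by blast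
  then have "H \<in> Fix" using PH lcos_mult_one[OF Hc] by (simp add: Fix_def)
  moreover have "Fix \<noteq> {H}" using p_dvd_Fix prime_gt_1_nat[OF p] by auto
  ultimately obtain A where A: "A \<in> Fix" "A \<noteq> H" by blast
  then obtain n where n: "n \<in> N" "A = n <# H" unfolding Fix_def W_def by blast
  show ?thesis
  proof (rule that[OF n(1)])
    show "n \<notin> H" using A(2) n(2) coset_join3[OF N.mem_carrier[OF n(1)] H] by blast
    show "x <# (n <# H) = n <# H" if "x \<in> P" for x using A(1) n(2) that unfolding Fix_def by auto
  qed
qed

(* N permutes the translates n H, so their number is a power of p, and it exceeds 1 unless N <= H.
   A subgroup of order p of H then fixes H and, counting fixed points mod p, some other translate
   n H, which puts it into H \<inter> n H n^-1. *)
lemma (in group) normal_p_subgroup_subset_strongly_p_embedded: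
  assumes fin: "finite (carrier G)" and p: "Factorial_Ring.prime p"
    and H: "strongly_p_embedded p G H" and N: "N \<lhd> G" and card_N: "card N = p ^ k"
  shows "N \<subseteq> H"
proof (rule ccontr)
  assume "\<not> N \<subseteq> H"
  then obtain n0 where n0: "n0 \<in> N" "n0 \<notin> H" by blast
  have Hsub: "subgroup H G" and pH: "p dvd card H"
    and emb: "\<And>g. g \<in> carrier G - H \<Longrightarrow> \<not> p dvd card (H \<inter> (g <# H #> inv g))"
    using H unfolding strongly_p_embedded_def by auto
  interpret N: normal N G by (rule N)
  define W where "W = (\<lambda>n. n <# H) ` N"
  have "card W dvd p ^ k"
    unfolding W_def card_N[symmetric]
    by (rule card_coset_orbit_dvd[OF N.subgroup_axioms subgroup.subset[OF Hsub]])
  then obtain j where j: "card W = p ^ j" using divides_primepow_nat[OF p] by blast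
  have "H \<in> W" "n0 <# H \<in> W"
    unfolding W_def using N.one_closed n0(1) lcos_mult_one[OF subgroup.subset[OF Hsub]] by force+
  moreover have "n0 <# H \<noteq> H" using lcos_self[OF N.mem_carrier[OF n0(1)] Hsub] n0(2) by blast
  ultimately have "card W \<noteq> 1" by (metis card_1_singletonE singletonD)
  then have "p dvd card W" using j by (cases j) auto
  moreover obtain P where P: "subgroup P G" "P \<subseteq> H" "card P = p"
    using subgroup_of_prime_order[OF fin p Hsub pH] .
  ultimately obtain n where n: "n \<in> N" "n \<notin> H" "\<And>x. x \<in> P \<Longrightarrow> x <# (n <# H) = n <# H"
    using p_subgroup_fixes_another_coset[OF fin p Hsub N P] unfolding W_def by blast
  have nc: "n \<in> carrier G" by (rule N.mem_carrier[OF n(1)])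
  have "P \<subseteq> n <# H #> inv n"
    using subset_conjugate_if_fixes_coset[OF Hsub nc subgroup.subset[OF P(1)] n(3)] .
  then have "card P dvd card (H \<inter> (n <# H #> inv n))"
    using card_subgroup_dvd[OF P(1) subgroups_Inter_pair[OF Hsub subgroup_conjugation_is_surj2[OF nc Hsub]]]
      P(2) by blast
  then show False using emb[of n] nc n(2) P(3) by blast
qed

lemma (in group) normal_p_subgroup_trivial_if_strongly_p_embedded:
  assumes fin: "finite (carrier G)" and p: "Factorial_Ring.prime p"
    and emb: "has_strongly_p_embedded p G" and N: "N \<lhd> G" and card_N: "card N = p ^ k"
  shows "N = {\<one>}"
proof -
  obtain H where H: "strongly_p_embedded p G H" using emb unfolding has_strongly_p_embedded_def by blast
  then have Hsub: "subgroup H G"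
    and no_p: "\<And>g. g \<in> carrier G - H \<Longrightarrow> \<not> p dvd card (H \<inter> (g <# H #> inv g))"
    unfolding strongly_p_embedded_def by auto
  obtain g where g: "g \<in> carrier G" "g \<notin> H"
    using H subgroup.subset[OF Hsub] unfolding strongly_p_embedded_def by blast
  interpret N: normal N G by (rule N)
  have NH: "N \<subseteq> H" by (rule normal_p_subgroup_subset_strongly_p_embedded[OF fin p H N card_N])
  have "N \<subseteq> g <# H #> inv g"
  proof
    fix x assume x: "x \<in> N"
    then have "inv g \<otimes> x \<otimes> g \<in> H" using NH N.inv_op_closed1[OF g(1)] by blast
    moreover have "x = g \<otimes> (inv g \<otimes> x \<otimes> g) \<otimes> inv g"
      using g(1) N.mem_carrier[OF x] by (simp add: m_assoc)
    ultimately show "x \<in> g <# H #> inv g" unfolding l_coset_def r_coset_def by blast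
  qed
  then have "card N dvd card (H \<inter> (g <# H #> inv g))"
    using card_subgroup_dvd[OF N.subgroup_axioms
        subgroups_Inter_pair[OF Hsub subgroup_conjugation_is_surj2[OF g(1) Hsub]]] NH by blast
  then have "card N = 1" using card_N no_p[of g] g by (cases k) auto
  then show ?thesis using N.one_closed by (metis card_1_singletonE singletonD)
qed

lemma (in group) O_p'_upper_subset_normal:
  assumes fin: "finite (carrier G)" and p: "Factorial_Ring.prime p" and N: "N \<lhd> G"
    and P: "subgroup P G" "P \<subseteq> N" and card_P: "card P = p ^ multiplicity p (order G)"
  shows "O_p'_upper p G \<subseteq> N"
proof -
  define m where "m = multiplicity p (order G)"
  have N_sub: "subgroup N G" by (rule normal_imp_subgroup[OF N])
  have "\<not> p dvd card (carrier G) div card N"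
  proof
    assume p_dvd_index: "p dvd card (carrier G) div card N"
    have lagrange_N: "card (carrier G) = card (rcosets N) * card N"
      using lagrange[OF N_sub] by (simp add: order_def)
    moreover have "card N > 0" using subgroup.finite_imp_card_positive[OF N_sub fin] .
    ultimately obtain r where r: "card (rcosets N) = p * r" using p_dvd_index by (auto elim!: dvdE)
    have "p ^ m dvd card N" using card_subgroup_dvd[OF P(1) N_sub P(2)] card_P m_def by simp
    then have "p ^ Suc m dvd order G" using lagrange_N r by (auto simp: order_def mult_ac elim!: dvdE)
    moreover have "order G \<noteq> 0" using fin order_gt_0_iff_finite by simp
    moreover have "\<not> is_unit p" using prime_gt_1_nat[OF p] by simp
    ultimately have "Suc m \<le> m" unfolding m_def by (rule multiplicity_geI[rotated 2])
    then show False by simp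
  qed
  then show ?thesis unfolding O_p'_upper_def using N by blast
qed

section \<open>Centres, commutators and conjugation maps\<close>

lemma (in group) subgroup_centre:
  assumes E: "subgroup E G"
  shows "subgroup (centre G E) G"
proof (rule subgroupI)
  have Ec: "x \<in> carrier G" if "x \<in> E" for x using subgroup.mem_carrier[OF E that] .
  have central: "z \<otimes> y = y \<otimes> z" if "z \<in> centre G E" "y \<in> E" for z y
    using that unfolding centre_def by blast
  have zE: "z \<in> E" if "z \<in> centre G E" for z using that unfolding centre_def by blast
  show "centre G E \<subseteq> carrier G" using zE Ec by blast
  have "\<one> \<in> centre G E" unfolding centre_def using subgroup.one_closed[OF E] Ec by simp
  then show "centre G E \<noteq> {}" by blast
  show "inv z \<in> centre G E" if z: "z \<in> centre G E" for z
  proof -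
    have zc: "z \<in> carrier G" by (rule Ec[OF zE[OF z]])
    have "inv z \<otimes> y = y \<otimes> inv z" if y: "y \<in> E" for y
    proof -
      have "inv z \<otimes> y = inv z \<otimes> (y \<otimes> z) \<otimes> inv z" using zc Ec[OF y] by (simp add: m_assoc)
      also have "\<dots> = inv z \<otimes> (z \<otimes> y) \<otimes> inv z" by (simp only: central[OF z y])
      also have "\<dots> = y \<otimes> inv z" using zc Ec[OF y] by (simp add: m_assoc)
      finally show ?thesis .
    qed
    then show ?thesis unfolding centre_def using subgroup.m_inv_closed[OF E zE[OF z]] by blast
  qed
  show "z \<otimes> z' \<in> centre G E" if z: "z \<in> centre G E" and z': "z' \<in> centre G E" for z z'
  proof -
    have c: "z \<in> carrier G" "z' \<in> carrier G" using z z' zE Ec by blast+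
    have "z \<otimes> z' \<otimes> y = y \<otimes> (z \<otimes> z')" if y: "y \<in> E" for y
    proof -
      have "z \<otimes> z' \<otimes> y = z \<otimes> (y \<otimes> z')" using c Ec[OF y] by (simp add: m_assoc central[OF z' y])
      also have "\<dots> = y \<otimes> (z \<otimes> z')" using c Ec[OF y] by (simp add: m_assoc[symmetric] central[OF z y])
      finally show ?thesis .
    qed
    then show ?thesis unfolding centre_def using subgroup.m_closed[OF E zE[OF z] zE[OF z']] by blast
  qed
qed

abbreviation commutator :: "('a, 'b) monoid_scheme \<Rightarrow> 'a \<Rightarrow> 'a \<Rightarrow> 'a" where
  "commutator G x y \<equiv> x \<otimes>\<^bsub>G\<^esub> y \<otimes>\<^bsub>G\<^esub> inv\<^bsub>G\<^esub> x \<otimes>\<^bsub>G\<^esub> inv\<^bsub>G\<^esub> y"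

lemma (in group) commutator_central_of_class_two:
  assumes class_two: "lower_central G 2 = {\<one>}"
    and x: "x \<in> carrier G" and y: "y \<in> carrier G" and z: "z \<in> carrier G"
  shows "commutator G x y \<otimes> z = z \<otimes> commutator G x y"
proof -
  define k where "k = commutator G x y"
  have kc: "k \<in> carrier G" unfolding k_def using x y by simp
  have "k \<in> lower_central G 1" unfolding k_def using x y by (auto intro: generate.incl)
  then have "commutator G k z \<in> lower_central G 2"
    using z by (auto simp: numeral_2_eq_2 intro: generate.incl)
  then have trivial: "commutator G k z = \<one>" using class_two by simp
  have "k \<otimes> z = commutator G k z \<otimes> (z \<otimes> k)" using kc z by (simp add: m_assoc)
  also have "\<dots> = z \<otimes> k" using trivial kc z by simp
  finally show ?thesis unfolding k_def .
qed

lemma (in group) normal_if_commutators_in: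
  assumes E: "subgroup E G"
    and comm: "\<And>s e. s \<in> carrier G \<Longrightarrow> e \<in> E \<Longrightarrow> commutator G s e \<in> E"
  shows "E \<lhd> G"
  unfolding normal_inv_iff
proof (intro conjI ballI E)
  fix s e assume s: "s \<in> carrier G" and e: "e \<in> E"
  have "s \<otimes> e \<otimes> inv s = commutator G s e \<otimes> e"
    using s subgroup.mem_carrier[OF E e] by (simp add: m_assoc)
  then show "s \<otimes> e \<otimes> inv s \<in> E" using subgroup.m_closed[OF E comm[OF s e] e] by simp
qed

lemma (in group) centraliser_if_cmap_eq:
  assumes E: "E \<subseteq> carrier G" and s: "s \<in> carrier G" and e: "e \<in> carrier G"
    and eq: "cmap G s E = cmap G e E"
  shows "s \<otimes> inv e \<in> centraliser G E"
proof -
  have "s \<otimes> inv e \<otimes> x = x \<otimes> (s \<otimes> inv e)" if x: "x \<in> E" for x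
  proof -
    have xc: "x \<in> carrier G" using x E by blast
    have conj: "inv s \<otimes> x \<otimes> s = inv e \<otimes> x \<otimes> e"
      using fun_cong[OF eq, of x] x by (simp add: cmap_def)
    have "s \<otimes> inv e \<otimes> x = s \<otimes> (inv e \<otimes> x \<otimes> e) \<otimes> inv e" using s e xc by (simp add: m_assoc)
    also have "\<dots> = s \<otimes> (inv s \<otimes> x \<otimes> s) \<otimes> inv e" by (simp only: conj)
    also have "\<dots> = x \<otimes> (s \<otimes> inv e)" using s e xc by (simp add: m_assoc)
    finally show ?thesis .
  qed
  then show ?thesis using s e by (simp add: centraliser_def)
qed

section \<open>Central automorphisms\<close>

locale automorphism_subgroup = group G for G (structure) +
  fixes E :: "'a set" and A :: "('a \<Rightarrow> 'a) set"
  assumes subgroup_E: "subgroup E G"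
    and subgroup_A: "subgroup A (BijGroup E)"
    and hom_A: "A \<subseteq> hom (G\<lparr>carrier := E\<rparr>) (G\<lparr>carrier := E\<rparr>)"
begin

abbreviation Aut :: "('a \<Rightarrow> 'a) monoid" where "Aut \<equiv> (BijGroup E)\<lparr>carrier := A\<rparr>"

lemma Aut_group: "group Aut"
  using subgroup.subgroup_is_group[OF subgroup_A group_BijGroup] .

sublocale Aut: group Aut by (rule Aut_group)

lemma E_carrier: "x \<in> E \<Longrightarrow> x \<in> carrier G"
  using subgroup.mem_carrier[OF subgroup_E] .

lemma centre_in_E: "z \<in> centre G E \<Longrightarrow> z \<in> E"
  by (simp add: centre_def)

lemma aut_Bij: "\<alpha> \<in> A \<Longrightarrow> \<alpha> \<in> Bij E"
  using subgroup.subset[OF subgroup_A] by (auto simp: BijGroup_def)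

lemma aut_closed: "\<alpha> \<in> A \<Longrightarrow> x \<in> E \<Longrightarrow> \<alpha> x \<in> E"
  using hom_A by (auto simp: hom_def)

lemma aut_mult: "\<alpha> \<in> A \<Longrightarrow> x \<in> E \<Longrightarrow> y \<in> E \<Longrightarrow> \<alpha> (x \<otimes> y) = \<alpha> x \<otimes> \<alpha> y"
  using hom_A by (auto simp: hom_def)

lemma aut_inv:
  assumes \<alpha>: "\<alpha> \<in> A" and x: "x \<in> E"
  shows "\<alpha> (inv x) = inv (\<alpha> x)"
proof -
  have "group_hom (G\<lparr>carrier := E\<rparr>) (G\<lparr>carrier := E\<rparr>) \<alpha>"
    using subgroup_imp_group[OF subgroup_E] \<alpha> hom_A
    unfolding group_hom_def group_hom_axioms_def by blast
  then show ?thesis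
    using group_hom.hom_inv[of "G\<lparr>carrier := E\<rparr>" "G\<lparr>carrier := E\<rparr>" \<alpha> x] x aut_closed[OF \<alpha> x]
      m_inv_consistent[OF subgroup_E] by simp
qed

lemma Aut_mult_apply: "\<alpha> \<in> A \<Longrightarrow> \<beta> \<in> A \<Longrightarrow> x \<in> E \<Longrightarrow> (\<alpha> \<otimes>\<^bsub>Aut\<^esub> \<beta>) x = \<alpha> (\<beta> x)"
  using aut_Bij by (simp add: BijGroup_def compose_def)

lemma Aut_one: "\<one>\<^bsub>Aut\<^esub> = (\<lambda>x\<in>E. x)"
  by (simp add: BijGroup_def)

lemma Aut_inv_apply:
  assumes \<alpha>: "\<alpha> \<in> A" and x: "x \<in> E"
  shows "\<alpha> ((inv\<^bsub>Aut\<^esub> \<alpha>) x) = x" and "(inv\<^bsub>Aut\<^esub> \<alpha>) (\<alpha> x) = x"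
proof -
  have inv: "inv\<^bsub>Aut\<^esub> \<alpha> \<in> A" using Aut.inv_closed \<alpha> by simp
  show "\<alpha> ((inv\<^bsub>Aut\<^esub> \<alpha>) x) = x"
    using Aut_mult_apply[OF \<alpha> inv x] Aut.r_inv[of \<alpha>] \<alpha> x by (simp add: Aut_one)
  show "(inv\<^bsub>Aut\<^esub> \<alpha>) (\<alpha> x) = x"
    using Aut_mult_apply[OF inv \<alpha> x] Aut.l_inv[of \<alpha>] \<alpha> x by (simp add: Aut_one)
qed

lemma Aut_eqI: "\<alpha> \<in> A \<Longrightarrow> \<beta> \<in> A \<Longrightarrow> (\<And>x. x \<in> E \<Longrightarrow> \<alpha> x = \<beta> x) \<Longrightarrow> \<alpha> = \<beta>"
  using aut_Bij by (metis Bij_imp_extensional extensionalityI)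

lemma Aut_conj_apply:
  assumes "\<gamma> \<in> A" "\<alpha> \<in> A" "x \<in> E"
  shows "(\<gamma> \<otimes>\<^bsub>Aut\<^esub> \<alpha> \<otimes>\<^bsub>Aut\<^esub> inv\<^bsub>Aut\<^esub> \<gamma>) x = \<gamma> (\<alpha> ((inv\<^bsub>Aut\<^esub> \<gamma>) x))"
proof -
  have "inv\<^bsub>Aut\<^esub> \<gamma> \<in> A" "\<gamma> \<otimes>\<^bsub>Aut\<^esub> \<alpha> \<in> A" "(inv\<^bsub>Aut\<^esub> \<gamma>) x \<in> E"
    using assms Aut.inv_closed Aut.m_closed aut_closed by auto
  then show ?thesis using assms by (simp only: Aut_mult_apply)
qed

lemma aut_centre_closed:
  assumes \<alpha>: "\<alpha> \<in> A" and z: "z \<in> centre G E"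
  shows "\<alpha> z \<in> centre G E"
proof -
  have zE: "z \<in> E" and central: "\<And>y. y \<in> E \<Longrightarrow> z \<otimes> y = y \<otimes> z"
    using z unfolding centre_def by blast+
  have "\<alpha> z \<otimes> y = y \<otimes> \<alpha> z" if y: "y \<in> E" for y
  proof -
    have y': "(inv\<^bsub>Aut\<^esub> \<alpha>) y \<in> E" using aut_closed Aut.inv_closed \<alpha> y by simp
    have "\<alpha> z \<otimes> y = \<alpha> (z \<otimes> (inv\<^bsub>Aut\<^esub> \<alpha>) y)"
      using aut_mult[OF \<alpha> zE y'] Aut_inv_apply(1)[OF \<alpha> y] by simp
    also have "\<dots> = \<alpha> ((inv\<^bsub>Aut\<^esub> \<alpha>) y \<otimes> z)" using central[OF y'] by simp
    also have "\<dots> = y \<otimes> \<alpha> z"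
      using aut_mult[OF \<alpha> y' zE] Aut_inv_apply(1)[OF \<alpha> y] by simp
    finally show ?thesis .
  qed
  then show ?thesis unfolding centre_def using aut_closed[OF \<alpha> zE] by blast
qed

definition central_automorphisms :: "('a \<Rightarrow> 'a) set" where
  "central_automorphisms = {\<alpha> \<in> A. \<forall>x\<in>E. inv x \<otimes> \<alpha> x \<in> centre G E}"

definition centre_fixing_automorphisms :: "('a \<Rightarrow> 'a) set" where
  "centre_fixing_automorphisms = {\<alpha> \<in> A. \<forall>z\<in>centre G E. \<alpha> z = z}"

lemma central_automorphismsD:
  assumes "\<alpha> \<in> central_automorphisms"
  shows "\<alpha> \<in> A" and "x \<in> E \<Longrightarrow> inv x \<otimes> \<alpha> x \<in> centre G E"
  using assms by (auto simp: central_automorphisms_def)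

lemma centre_fixing_automorphismsD:
  assumes "\<alpha> \<in> centre_fixing_automorphisms"
  shows "\<alpha> \<in> A" and "z \<in> centre G E \<Longrightarrow> \<alpha> z = z"
  using assms by (auto simp: centre_fixing_automorphisms_def)

lemma central_automorphisms_inv_closed:
  assumes \<alpha>: "\<alpha> \<in> central_automorphisms"
  shows "inv\<^bsub>Aut\<^esub> \<alpha> \<in> central_automorphisms"
proof -
  have inv_\<alpha>: "inv\<^bsub>Aut\<^esub> \<alpha> \<in> A" using Aut.inv_closed central_automorphismsD(1)[OF \<alpha>] by simp
  have "inv x \<otimes> (inv\<^bsub>Aut\<^esub> \<alpha>) x \<in> centre G E" if x: "x \<in> E" for x
  proof -
    define y where "y = (inv\<^bsub>Aut\<^esub> \<alpha>) x"
    have y: "y \<in> E" "\<alpha> y = x"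
      unfolding y_def using aut_closed[OF inv_\<alpha> x] Aut_inv_apply(1)[OF central_automorphismsD(1)[OF \<alpha>] x]
      by auto
    have "inv (inv y \<otimes> \<alpha> y) \<in> centre G E"
      using subgroup.m_inv_closed[OF subgroup_centre[OF subgroup_E] central_automorphismsD(2)[OF \<alpha> y(1)]] .
    moreover have "inv (inv y \<otimes> \<alpha> y) = inv x \<otimes> y" using x y E_carrier by (simp add: inv_mult_group)
    ultimately show ?thesis unfolding y_def by simp
  qed
  then show ?thesis using inv_\<alpha> by (simp add: central_automorphisms_def)
qed

lemma central_automorphisms_mult_closed:
  assumes \<alpha>: "\<alpha> \<in> central_automorphisms" and \<beta>: "\<beta> \<in> central_automorphisms"
  shows "\<alpha> \<otimes>\<^bsub>Aut\<^esub> \<beta> \<in> central_automorphisms"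
proof -
  note \<alpha>' = central_automorphismsD[OF \<alpha>] and \<beta>' = central_automorphismsD[OF \<beta>]
  have "inv x \<otimes> (\<alpha> \<otimes>\<^bsub>Aut\<^esub> \<beta>) x \<in> centre G E" if x: "x \<in> E" for x
  proof -
    have \<beta>x: "\<beta> x \<in> E" by (rule aut_closed[OF \<beta>'(1) x])
    have "inv x \<otimes> (\<alpha> \<otimes>\<^bsub>Aut\<^esub> \<beta>) x = (inv x \<otimes> \<beta> x) \<otimes> (inv (\<beta> x) \<otimes> \<alpha> (\<beta> x))"
      using Aut_mult_apply[OF \<alpha>'(1) \<beta>'(1) x] x \<beta>x aut_closed[OF \<alpha>'(1) \<beta>x] E_carrier
      by (simp add: m_assoc)
    then show ?thesis
      using subgroup.m_closed[OF subgroup_centre[OF subgroup_E] \<beta>'(2)[OF x] \<alpha>'(2)[OF \<beta>x]] by simp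
  qed
  then show ?thesis using Aut.m_closed \<alpha>'(1) \<beta>'(1) by (simp add: central_automorphisms_def)
qed

lemma central_automorphisms_conj_closed:
  assumes \<gamma>: "\<gamma> \<in> A" and \<alpha>: "\<alpha> \<in> central_automorphisms"
  shows "\<gamma> \<otimes>\<^bsub>Aut\<^esub> \<alpha> \<otimes>\<^bsub>Aut\<^esub> inv\<^bsub>Aut\<^esub> \<gamma> \<in> central_automorphisms"
proof -
  note \<alpha>' = central_automorphismsD[OF \<alpha>]
  have "inv x \<otimes> (\<gamma> \<otimes>\<^bsub>Aut\<^esub> \<alpha> \<otimes>\<^bsub>Aut\<^esub> inv\<^bsub>Aut\<^esub> \<gamma>) x \<in> centre G E" if x: "x \<in> E" for x
  proof -
    define y where "y = (inv\<^bsub>Aut\<^esub> \<gamma>) x"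
    have y: "y \<in> E" "\<gamma> y = x"
      unfolding y_def using aut_closed Aut.inv_closed \<gamma> x Aut_inv_apply(1)[OF \<gamma> x] by auto
    define z where "z = inv y \<otimes> \<alpha> y"
    have z: "z \<in> centre G E" unfolding z_def using \<alpha>'(2)[OF y(1)] .
    have "\<alpha> y = y \<otimes> z" unfolding z_def using y(1) aut_closed[OF \<alpha>'(1) y(1)] E_carrier by simp
    then have "(\<gamma> \<otimes>\<^bsub>Aut\<^esub> \<alpha> \<otimes>\<^bsub>Aut\<^esub> inv\<^bsub>Aut\<^esub> \<gamma>) x = x \<otimes> \<gamma> z"
      using Aut_conj_apply[OF \<gamma> \<alpha>'(1) x] aut_mult[OF \<gamma> y(1) centre_in_E[OF z]] y(2)
      unfolding y_def by simp
    then show ?thesis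
      using aut_centre_closed[OF \<gamma> z] x aut_closed[OF \<gamma> centre_in_E[OF z]] E_carrier by simp
  qed
  then show ?thesis
    using Aut.m_closed Aut.inv_closed \<gamma> \<alpha>'(1) by (simp add: central_automorphisms_def)
qed

lemma central_automorphisms_normal: "central_automorphisms \<lhd> Aut"
  unfolding Aut.normal_inv_iff
proof (intro conjI ballI Aut.subgroupI)
  show "central_automorphisms \<subseteq> carrier Aut" by (auto simp: central_automorphisms_def)
  have "\<one>\<^bsub>Aut\<^esub> \<in> central_automorphisms"
    using Aut.one_closed subgroup.one_closed[OF subgroup_centre[OF subgroup_E]] E_carrier
    by (auto simp: central_automorphisms_def Aut_one)
  then show "central_automorphisms \<noteq> {}" by blast
next
  fix \<gamma> \<alpha> assume "\<gamma> \<in> carrier Aut" and "\<alpha> \<in> central_automorphisms"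
  then show "\<gamma> \<otimes>\<^bsub>Aut\<^esub> \<alpha> \<otimes>\<^bsub>Aut\<^esub> inv\<^bsub>Aut\<^esub> \<gamma> \<in> central_automorphisms"
    using central_automorphisms_conj_closed by simp
qed (fact central_automorphisms_inv_closed central_automorphisms_mult_closed)+

lemma centre_fixing_automorphisms_conj_closed:
  assumes \<gamma>: "\<gamma> \<in> A" and \<alpha>: "\<alpha> \<in> centre_fixing_automorphisms"
  shows "\<gamma> \<otimes>\<^bsub>Aut\<^esub> \<alpha> \<otimes>\<^bsub>Aut\<^esub> inv\<^bsub>Aut\<^esub> \<gamma> \<in> centre_fixing_automorphisms"
proof -
  note \<alpha>' = centre_fixing_automorphismsD[OF \<alpha>]
  have "(\<gamma> \<otimes>\<^bsub>Aut\<^esub> \<alpha> \<otimes>\<^bsub>Aut\<^esub> inv\<^bsub>Aut\<^esub> \<gamma>) z = z" if z: "z \<in> centre G E" for z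
  proof -
    have "(inv\<^bsub>Aut\<^esub> \<gamma>) z \<in> centre G E" using aut_centre_closed Aut.inv_closed \<gamma> z by simp
    then show ?thesis
      using Aut_conj_apply[OF \<gamma> \<alpha>'(1) centre_in_E[OF z]] \<alpha>'(2) Aut_inv_apply(1)[OF \<gamma> centre_in_E[OF z]]
      by simp
  qed
  then show ?thesis
    using Aut.m_closed Aut.inv_closed \<gamma> \<alpha>'(1) by (simp add: centre_fixing_automorphisms_def)
qed

lemma centre_fixing_automorphisms_normal: "centre_fixing_automorphisms \<lhd> Aut"
  unfolding Aut.normal_inv_iff
proof (intro conjI ballI Aut.subgroupI)
  have "\<one>\<^bsub>Aut\<^esub> \<in> centre_fixing_automorphisms"
    using Aut.one_closed centre_in_E by (auto simp: centre_fixing_automorphisms_def Aut_one)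
  then show "centre_fixing_automorphisms \<noteq> {}" by blast
next
  fix \<alpha> assume \<alpha>: "\<alpha> \<in> centre_fixing_automorphisms"
  have "(inv\<^bsub>Aut\<^esub> \<alpha>) z = z" if "z \<in> centre G E" for z
    using Aut_inv_apply(2)[OF centre_fixing_automorphismsD(1)[OF \<alpha>] centre_in_E[OF that]]
      centre_fixing_automorphismsD(2)[OF \<alpha> that] by simp
  then show "inv\<^bsub>Aut\<^esub> \<alpha> \<in> centre_fixing_automorphisms"
    using Aut.inv_closed centre_fixing_automorphismsD(1)[OF \<alpha>]
    by (simp add: centre_fixing_automorphisms_def)
next
  fix \<alpha> \<beta> assume \<alpha>: "\<alpha> \<in> centre_fixing_automorphisms" and \<beta>: "\<beta> \<in> centre_fixing_automorphisms"
  note \<alpha>' = centre_fixing_automorphismsD[OF \<alpha>] and \<beta>' = centre_fixing_automorphismsD[OF \<beta>]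
  have "(\<alpha> \<otimes>\<^bsub>Aut\<^esub> \<beta>) z = z" if "z \<in> centre G E" for z
    using Aut_mult_apply[OF \<alpha>'(1) \<beta>'(1) centre_in_E[OF that]] \<alpha>'(2) \<beta>'(2) that by simp
  then show "\<alpha> \<otimes>\<^bsub>Aut\<^esub> \<beta> \<in> centre_fixing_automorphisms"
    using Aut.m_closed \<alpha>'(1) \<beta>'(1) by (simp add: centre_fixing_automorphisms_def)
next
  fix \<gamma> \<alpha> assume "\<gamma> \<in> carrier Aut" and "\<alpha> \<in> centre_fixing_automorphisms"
  then show "\<gamma> \<otimes>\<^bsub>Aut\<^esub> \<alpha> \<otimes>\<^bsub>Aut\<^esub> inv\<^bsub>Aut\<^esub> \<gamma> \<in> centre_fixing_automorphisms"
    using centre_fixing_automorphisms_conj_closed by simp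
qed (auto simp: centre_fixing_automorphisms_def)

definition displacement :: "('a \<Rightarrow> 'a) \<Rightarrow> 'a \<Rightarrow> 'a" where
  "displacement \<alpha> = (\<lambda>x\<in>E. inv x \<otimes> \<alpha> x)"

lemma inj_on_displacement: "inj_on displacement A"
proof (rule inj_onI)
  fix \<alpha> \<beta> assume \<alpha>: "\<alpha> \<in> A" and \<beta>: "\<beta> \<in> A" and eq: "displacement \<alpha> = displacement \<beta>"
  show "\<alpha> = \<beta>"
  proof (rule Aut_eqI[OF \<alpha> \<beta>])
    fix x assume x: "x \<in> E"
    then have "inv x \<otimes> \<alpha> x = inv x \<otimes> \<beta> x" using fun_cong[OF eq, of x] by (simp add: displacement_def)
    then show "\<alpha> x = \<beta> x" using x E_carrier aut_closed[OF \<alpha> x] aut_closed[OF \<beta> x] by simp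
  qed
qed

(* Multiplicativity uses that alpha fixes the centre: alpha (x z) = alpha x z for z in Z(E). *)
lemma displacement_mult:
  assumes \<alpha>: "\<alpha> \<in> centre_fixing_automorphisms" and \<beta>: "\<beta> \<in> central_automorphisms" and x: "x \<in> E"
  shows "displacement (\<alpha> \<otimes>\<^bsub>Aut\<^esub> \<beta>) x = displacement \<alpha> x \<otimes> displacement \<beta> x"
proof -
  note \<alpha>' = centre_fixing_automorphismsD[OF \<alpha>] and \<beta>' = central_automorphismsD[OF \<beta>]
  define z where "z = inv x \<otimes> \<beta> x"
  have z: "z \<in> centre G E" unfolding z_def using \<beta>'(2)[OF x] .
  have "\<beta> x = x \<otimes> z" unfolding z_def using x aut_closed[OF \<beta>'(1) x] E_carrier by simp
  then have "(\<alpha> \<otimes>\<^bsub>Aut\<^esub> \<beta>) x = \<alpha> x \<otimes> z"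
    using Aut_mult_apply[OF \<alpha>'(1) \<beta>'(1) x] aut_mult[OF \<alpha>'(1) x centre_in_E[OF z]] \<alpha>'(2)[OF z] by simp
  then show ?thesis
    using x z aut_closed[OF \<alpha>'(1) x] centre_in_E E_carrier
    by (simp add: displacement_def z_def[symmetric] m_assoc)
qed

lemma card_central_centre_fixing_dvd:
  assumes fin: "finite E"
  shows "card (central_automorphisms \<inter> centre_fixing_automorphisms) dvd card (centre G E) ^ card E"
proof -
  define C where "C = central_automorphisms \<inter> centre_fixing_automorphisms"
  define P where "P = product_group E (\<lambda>_. G\<lparr>carrier := centre G E\<rparr>)"
  have C_sub: "subgroup C Aut"
    unfolding C_def using Aut.normal_subgroup_intersect[OF central_automorphisms_normal
        centre_fixing_automorphisms_normal] by (rule normal_imp_subgroup)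
  have P_group: "group P"
    unfolding P_def using subgroup_imp_group[OF subgroup_centre[OF subgroup_E]] by simp
  have "displacement (\<alpha> \<otimes>\<^bsub>Aut\<^esub> \<beta>) = displacement \<alpha> \<otimes>\<^bsub>P\<^esub> displacement \<beta>"
    if "\<alpha> \<in> C" "\<beta> \<in> C" for \<alpha> \<beta>
  proof
    fix x show "displacement (\<alpha> \<otimes>\<^bsub>Aut\<^esub> \<beta>) x = (displacement \<alpha> \<otimes>\<^bsub>P\<^esub> displacement \<beta>) x"
      using displacement_mult[of \<alpha> \<beta> x] that
      by (cases "x \<in> E") (auto simp: P_def C_def displacement_def)
  qed
  then have "group_hom (Aut\<lparr>carrier := C\<rparr>) P displacement"
    unfolding group_hom_def group_hom_axioms_def
    using Aut.subgroup_imp_group[OF C_sub] P_group central_automorphismsD(2)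
    by (auto simp: hom_def P_def C_def displacement_def)
  then have "card (displacement ` C) dvd card (carrier P)"
    using group_hom.img_is_subgroup[of "Aut\<lparr>carrier := C\<rparr>" P displacement]
      group.card_subgroup_dvd[OF P_group _ group.subgroup_self[OF P_group]] subgroup.subset
    by fastforce
  moreover have "inj_on displacement C"
    using inj_on_displacement subgroup.subset[OF C_sub] by (auto intro: inj_on_subset)
  moreover have "card (carrier P) = card (centre G E) ^ card E"
    unfolding P_def using card_funcsetE[OF fin] by simp
  ultimately show ?thesis unfolding C_def by (simp add: card_image)
qed

lemma cmap_in_Aut: "inn G E \<subseteq> A \<Longrightarrow> g \<in> E \<Longrightarrow> cmap G g E \<in> A"
  by (auto simp: inn_def)

lemma cmap_apply: "x \<in> E \<Longrightarrow> cmap G g E x = inv g \<otimes> x \<otimes> g"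
  by (simp add: cmap_def)

lemma Aut_mult_cmap:
  assumes inn: "inn G E \<subseteq> A" and g: "g \<in> E" and h: "h \<in> E"
  shows "cmap G g E \<otimes>\<^bsub>Aut\<^esub> cmap G h E = cmap G (h \<otimes> g) E"
proof (rule Aut_eqI)
  have hg: "h \<otimes> g \<in> E" using subgroup.m_closed[OF subgroup_E h g] .
  show "cmap G g E \<otimes>\<^bsub>Aut\<^esub> cmap G h E \<in> A" using Aut.m_closed cmap_in_Aut[OF inn] g h by simp
  show "cmap G (h \<otimes> g) E \<in> A" using cmap_in_Aut[OF inn hg] .
  fix x assume x: "x \<in> E"
  have "cmap G h E x \<in> E" using aut_closed[OF cmap_in_Aut[OF inn h] x] .
  then show "(cmap G g E \<otimes>\<^bsub>Aut\<^esub> cmap G h E) x = cmap G (h \<otimes> g) E x"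
    using Aut_mult_apply[OF cmap_in_Aut[OF inn g] cmap_in_Aut[OF inn h] x] cmap_apply x hg g h E_carrier
    by (simp add: m_assoc inv_mult_group)
qed

lemma Aut_conj_cmap:
  assumes inn: "inn G E \<subseteq> A" and \<gamma>: "\<gamma> \<in> A" and e: "e \<in> E"
  shows "\<gamma> \<otimes>\<^bsub>Aut\<^esub> cmap G e E \<otimes>\<^bsub>Aut\<^esub> inv\<^bsub>Aut\<^esub> \<gamma> = cmap G (\<gamma> e) E"
proof (rule Aut_eqI)
  show "\<gamma> \<otimes>\<^bsub>Aut\<^esub> cmap G e E \<otimes>\<^bsub>Aut\<^esub> inv\<^bsub>Aut\<^esub> \<gamma> \<in> A"
    using Aut.m_closed Aut.inv_closed cmap_in_Aut[OF inn e] \<gamma> by simp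
  show "cmap G (\<gamma> e) E \<in> A" using cmap_in_Aut[OF inn aut_closed[OF \<gamma> e]] .
  fix x assume x: "x \<in> E"
  define y where "y = (inv\<^bsub>Aut\<^esub> \<gamma>) x"
  have y: "y \<in> E" "\<gamma> y = x"
    unfolding y_def using aut_closed Aut.inv_closed \<gamma> x Aut_inv_apply(1)[OF \<gamma> x] by auto
  have ie: "inv e \<in> E" using subgroup.m_inv_closed[OF subgroup_E e] .
  have "\<gamma> (inv e \<otimes> y \<otimes> e) = inv (\<gamma> e) \<otimes> x \<otimes> \<gamma> e"
    using aut_mult[OF \<gamma> subgroup.m_closed[OF subgroup_E ie y(1)] e] aut_mult[OF \<gamma> ie y(1)]
      aut_inv[OF \<gamma> e] y(2) by simp
  then show "(\<gamma> \<otimes>\<^bsub>Aut\<^esub> cmap G e E \<otimes>\<^bsub>Aut\<^esub> inv\<^bsub>Aut\<^esub> \<gamma>) x = cmap G (\<gamma> e) E x"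
    using Aut_conj_apply[OF \<gamma> cmap_in_Aut[OF inn e] x] cmap_apply[OF y(1)] cmap_apply[OF x]
    unfolding y_def by simp
qed

lemma inn_normal:
  assumes inn: "inn G E \<subseteq> A"
  shows "inn G E \<lhd> Aut"
  unfolding Aut.normal_inv_iff
proof (intro conjI ballI Aut.subgroupI)
  show "inn G E \<subseteq> carrier Aut" using inn by simp
  show "inn G E \<noteq> {}" using subgroup.one_closed[OF subgroup_E] by (auto simp: inn_def)
next
  fix \<alpha> assume "\<alpha> \<in> inn G E"
  then obtain g where g: "g \<in> E" "\<alpha> = cmap G g E" by (auto simp: inn_def)
  have ig: "inv g \<in> E" using subgroup.m_inv_closed[OF subgroup_E g(1)] .
  have "cmap G \<one> E = \<one>\<^bsub>Aut\<^esub>" using E_carrier by (auto simp: cmap_def Aut_one intro!: restrict_ext)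
  then have "inv\<^bsub>Aut\<^esub> \<alpha> = cmap G (inv g) E"
    using Aut.inv_equality[of "cmap G (inv g) E" \<alpha>] Aut_mult_cmap[OF inn ig g(1)]
      cmap_in_Aut[OF inn] g ig E_carrier by simp
  then show "inv\<^bsub>Aut\<^esub> \<alpha> \<in> inn G E" using ig by (auto simp: inn_def)
next
  fix \<alpha> \<beta> assume "\<alpha> \<in> inn G E" "\<beta> \<in> inn G E"
  then obtain g h where "g \<in> E" "\<alpha> = cmap G g E" "h \<in> E" "\<beta> = cmap G h E" by (auto simp: inn_def)
  then show "\<alpha> \<otimes>\<^bsub>Aut\<^esub> \<beta> \<in> inn G E"
    using Aut_mult_cmap[OF inn] subgroup.m_closed[OF subgroup_E] by (auto simp: inn_def)
next
  fix \<gamma> \<alpha> assume "\<gamma> \<in> carrier Aut" "\<alpha> \<in> inn G E"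
  then show "\<gamma> \<otimes>\<^bsub>Aut\<^esub> \<alpha> \<otimes>\<^bsub>Aut\<^esub> inv\<^bsub>Aut\<^esub> \<gamma> \<in> inn G E"
    using Aut_conj_cmap[OF inn] aut_closed by (auto simp: inn_def)
qed

lemma finite_Aut:
  assumes "finite E"
  shows "finite A"
proof (rule finite_subset)
  show "A \<subseteq> E \<rightarrow>\<^sub>E E" using aut_Bij aut_closed by (auto simp: Bij_def PiE_iff extensional_def)
  show "finite (E \<rightarrow>\<^sub>E E)" using assms by (simp add: finite_PiE)
qed

lemma card_central_centre_fixing_prime_power:
  assumes fin: "finite E" and p: "Factorial_Ring.prime p" and card_E: "card E = p ^ n"
  obtains k where "card (central_automorphisms \<inter> centre_fixing_automorphisms) = p ^ k"
proof -
  have "card (centre G E) dvd p ^ n"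
    using card_subgroup_dvd[OF subgroup_centre[OF subgroup_E] subgroup_E] card_E
    by (auto simp: centre_def)
  then obtain i where "card (centre G E) = p ^ i" using divides_primepow_nat[OF p] by blast
  then have "card (central_automorphisms \<inter> centre_fixing_automorphisms) dvd p ^ (i * card E)"
    using card_central_centre_fixing_dvd[OF fin] by (simp add: power_mult)
  then show ?thesis using divides_primepow_nat[OF p] that by blast
qed

lemma central_centre_fixing_subset_inn:
  assumes fin: "finite E" and p: "Factorial_Ring.prime p" and card_E: "card E = p ^ n"
    and inn: "inn G E \<subseteq> A" and emb: "has_strongly_p_embedded p (Aut Mod inn G E)"
  shows "central_automorphisms \<inter> centre_fixing_automorphisms \<subseteq> inn G E"
proof -
  define C where "C = central_automorphisms \<inter> centre_fixing_automorphisms"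
  define \<pi> where "\<pi> a = inn G E #>\<^bsub>Aut\<^esub> a" for a
  interpret I: normal "inn G E" Aut by (rule inn_normal[OF inn])
  have C_normal: "C \<lhd> Aut"
    unfolding C_def by (rule Aut.normal_subgroup_intersect[OF central_automorphisms_normal
        centre_fixing_automorphisms_normal])
  obtain k where card_C: "card C = p ^ k"
    using card_central_centre_fixing_prime_power[OF fin p card_E] unfolding C_def .
  have \<pi>_hom: "group_hom Aut (Aut Mod inn G E) \<pi>"
    unfolding group_hom_def group_hom_axioms_def \<pi>_def
    using Aut.is_group I.factorgroup_is_group I.r_coset_hom_Mod by blast
  have "\<pi> ` carrier Aut = carrier (Aut Mod inn G E)"
    by (auto simp: \<pi>_def FactGroup_def RCOSETS_def)
  then have normal_image: "\<pi> ` C \<lhd> Aut Mod inn G E"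
    using normal.surj_hom_normal_subgroup[OF C_normal \<pi>_hom] by blast
  have "card (\<pi> ` C) dvd p ^ k"
    using group_hom.card_image_subgroup_dvd[OF \<pi>_hom normal_imp_subgroup[OF C_normal]] card_C by simp
  then obtain j where card_image: "card (\<pi> ` C) = p ^ j" using divides_primepow_nat[OF p] by blast
  have "finite (carrier (Aut Mod inn G E))"
    using finite_Aut[OF fin] by (simp add: FactGroup_def RCOSETS_def)
  then have trivial: "\<pi> ` C = {\<one>\<^bsub>Aut Mod inn G E\<^esub>}"
    by (rule group.normal_p_subgroup_trivial_if_strongly_p_embedded[OF I.factorgroup_is_group _ p emb
        normal_image card_image])
  show ?thesis
  proof
    fix \<alpha> assume \<alpha>: "\<alpha> \<in> central_automorphisms \<inter> centre_fixing_automorphisms"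
    then have "\<pi> \<alpha> = inn G E" using trivial unfolding C_def by (auto simp: FactGroup_def)
    moreover have "\<alpha> \<in> carrier Aut" using \<alpha> by (auto simp: central_automorphisms_def)
    ultimately show "\<alpha> \<in> inn G E"
      unfolding \<pi>_def using Aut.coset_join1[OF _ _ I.subgroup_axioms] by blast
  qed
qed

end

section \<open>Essential subgroups of fusion systems on p-groups of class two\<close>

locale essential_subgroup_class_two =
  fixes p :: nat and S :: "'a monoid" (structure) and F :: "'a fusion" and E :: "'a set"
  assumes prime: "Factorial_Ring.prime p"
    and p_group: "p_group p S"
    and class_two: "nilpotency_class S 2"
    and saturated: "saturated p S F"
    and essential: "essential p S F E"
begin

sublocale S: group S using p_group by (simp add: p_group_def)

lemma finite_S: "finite (carrier S)"
  using p_group by (simp add: p_group_def)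

lemma subgroup_E: "subgroup E S"
  using essential by (simp add: essential_def)

lemma finite_E: "finite E"
  using finite_S subgroup.subset[OF subgroup_E] finite_subset by blast

lemma E_carrier: "x \<in> E \<Longrightarrow> x \<in> carrier S"
  using subgroup.mem_carrier[OF subgroup_E] .

lemma fusion: "fusion_system S F"
  using saturated by (simp add: saturated_def)

lemma cmap_in_F:
  assumes "subgroup Q S" and "s \<in> carrier S" and "cmap S s E ` E \<subseteq> Q"
  shows "cmap S s E \<in> F E Q"
  using fusion assms subgroup_E unfolding fusion_system_def hom_S_def by blast

lemma centraliser_subset: "centraliser S E \<subseteq> E"
proof -
  have id: "cmap S \<one>\<^bsub>S\<^esub> E = (\<lambda>x\<in>E. x)" using E_carrier by (auto simp: cmap_def intro!: restrict_ext)
  have "(\<lambda>x\<in>E. x) \<in> F E (carrier S)"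
    using cmap_in_F[OF S.subgroup_self S.one_closed] E_carrier unfolding id by auto
  then show ?thesis
    using essential unfolding essential_def F_centric_def by fastforce
qed

lemma commutator_in_centre:
  assumes "x \<in> carrier S" and "y \<in> carrier S"
  shows "commutator S x y \<in> centre S E"
proof -
  have "lower_central S 2 = {\<one>\<^bsub>S\<^esub>}" using class_two by (simp add: nilpotency_class_def)
  then have central: "commutator S x y \<otimes>\<^bsub>S\<^esub> z = z \<otimes>\<^bsub>S\<^esub> commutator S x y" if "z \<in> carrier S" for z
    using S.commutator_central_of_class_two assms that by blast
  then have "commutator S x y \<in> E"
    using centraliser_subset assms E_carrier by (auto simp: centraliser_def)
  then show ?thesis using central E_carrier by (simp add: centre_def)
qed

lemma E_normal: "E \<lhd> S"
  using S.normal_if_commutators_in[OF subgroup_E] commutator_in_centre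
  by (auto simp: centre_def E_carrier)

lemma cmap_in_F_E_E: "s \<in> carrier S \<Longrightarrow> cmap S s E \<in> F E E"
  using cmap_in_F[OF subgroup_E] normal.inv_op_closed1[OF E_normal] by (auto simp: cmap_def)

lemma F_E_E_in_hom: "F E E \<subseteq> hom (S\<lparr>carrier := E\<rparr>) (S\<lparr>carrier := E\<rparr>)"
  using fusion subgroup_E by (auto simp: fusion_system_def inj_maps_def)

lemma F_E_E_bij: "\<alpha> \<in> F E E \<Longrightarrow> \<alpha> \<in> Bij E"
proof -
  assume \<alpha>: "\<alpha> \<in> F E E"
  then have "\<alpha> \<in> extensional E" "inj_on \<alpha> E"
    using fusion subgroup_E unfolding fusion_system_def inj_maps_def by blast+
  moreover have "\<alpha> ` E \<subseteq> E" using F_E_E_in_hom \<alpha> by (auto simp: hom_def)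
  ultimately show ?thesis
    using endo_inj_surj[OF finite_E] by (auto simp: Bij_def bij_betw_def)
qed

lemma F_E_E_subgroup: "subgroup (F E E) (BijGroup E)"
proof (rule group.subgroupI[OF group_BijGroup])
  show "F E E \<subseteq> carrier (BijGroup E)" using F_E_E_bij by (auto simp: BijGroup_def)
  show "F E E \<noteq> {}" using cmap_in_F_E_E[OF S.one_closed] by blast
next
  fix \<alpha> assume \<alpha>: "\<alpha> \<in> F E E"
  then have "\<alpha> ` E = E" using F_E_E_bij by (auto simp: Bij_def bij_betw_def)
  then have "restrict (inv_into E \<alpha>) E \<in> F E E"
    using fusion subgroup_E \<alpha> unfolding fusion_system_def by metis
  then show "inv\<^bsub>BijGroup E\<^esub> \<alpha> \<in> F E E" using inv_BijGroup[OF F_E_E_bij[OF \<alpha>]] by simp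
next
  fix \<alpha> \<beta> assume "\<alpha> \<in> F E E" "\<beta> \<in> F E E"
  then show "\<alpha> \<otimes>\<^bsub>BijGroup E\<^esub> \<beta> \<in> F E E"
    using fusion subgroup_E F_E_E_bij unfolding fusion_system_def by (simp add: BijGroup_def)
qed

sublocale aut: automorphism_subgroup S E "F E E"
  unfolding automorphism_subgroup_def automorphism_subgroup_axioms_def
  using S.is_group subgroup_E F_E_E_subgroup F_E_E_in_hom by blast

lemma aut_S_subset_central: "aut_S S E \<subseteq> aut.central_automorphisms"
proof
  fix \<alpha> assume "\<alpha> \<in> aut_S S E"
  then obtain g where g: "g \<in> carrier S" "\<alpha> = cmap S g E" by (auto simp: aut_S_def hom_S_def)
  have "inv x \<otimes> \<alpha> x \<in> centre S E" if x: "x \<in> E" for x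
  proof -
    have "inv x \<otimes> \<alpha> x = commutator S (inv x) (inv g)"
      using g x E_carrier by (simp add: cmap_def S.m_assoc)
    then show ?thesis using commutator_in_centre[of "inv x" "inv g"] g x E_carrier by simp
  qed
  then show "\<alpha> \<in> aut.central_automorphisms"
    using cmap_in_F_E_E g by (simp add: aut.central_automorphisms_def)
qed

lemma O_p'_upper_subset_central: "O_p'_upper p (aut_F F E) \<subseteq> aut.central_automorphisms"
proof -
  have "sylow_subgroup p aut.Aut (aut_S S E)"
    using saturated subgroup_E essential unfolding saturated_def essential_def aut_F_def by blast
  then show ?thesis
    unfolding aut_F_def sylow_subgroup_def
    using aut.Aut.O_p'_upper_subset_normal[OF _ prime aut.central_automorphisms_normal]
      aut_S_subset_central aut.finite_Aut[OF finite_E] by auto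
qed

lemma action_commutator_subset_centre:
  "action_commutator S (O_p'_upper p (aut_F F E)) E \<subseteq> centre S E"
proof -
  interpret E: group "S\<lparr>carrier := E\<rparr>" by (rule S.subgroup_imp_group[OF subgroup_E])
  have "subgroup (centre S E) (S\<lparr>carrier := E\<rparr>)"
    using S.subgroup_incl[OF S.subgroup_centre[OF subgroup_E] subgroup_E] by (auto simp: centre_def)
  moreover have "{inv x \<otimes> \<alpha> x | \<alpha> x. \<alpha> \<in> O_p'_upper p (aut_F F E) \<and> x \<in> E} \<subseteq> centre S E"
    using O_p'_upper_subset_central by (auto simp: aut.central_automorphisms_def)
  ultimately show ?thesis unfolding action_commutator_def by (rule E.generate_subgroup_incl[rotated])
qed

lemma central_centre_fixing_subset_inn:
  "aut.central_automorphisms \<inter> aut.centre_fixing_automorphisms \<subseteq> inn S E"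
proof -
  obtain m where "card (carrier S) = p ^ m" using p_group by (auto simp: p_group_def)
  then have "card E dvd p ^ m"
    using S.card_subgroup_dvd[OF subgroup_E S.subgroup_self subgroup.subset[OF subgroup_E]] by simp
  then obtain n where card_E: "card E = p ^ n" using divides_primepow_nat[OF prime] by blast
  have "inn S E \<subseteq> F E E" using cmap_in_F_E_E E_carrier by (auto simp: inn_def)
  moreover have "has_strongly_p_embedded p (aut.Aut Mod inn S E)"
    using essential by (simp add: essential_def out_F_def aut_F_def)
  ultimately show ?thesis by (rule aut.central_centre_fixing_subset_inn[OF finite_E prime card_E])
qed

lemma centraliser_centre: "centraliser S (centre S E) = E"
proof
  show "E \<subseteq> centraliser S (centre S E)" using E_carrier by (auto simp: centraliser_def centre_def)
  show "centraliser S (centre S E) \<subseteq> E"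
  proof
    fix s assume "s \<in> centraliser S (centre S E)"
    then have s: "s \<in> carrier S" and commutes: "\<And>z. z \<in> centre S E \<Longrightarrow> s \<otimes> z = z \<otimes> s"
      by (auto simp: centraliser_def)
    have fixes_centre: "cmap S s E z = z" if z: "z \<in> centre S E" for z
    proof -
      have zc: "z \<in> carrier S" using E_carrier[OF aut.centre_in_E[OF z]] .
      have "cmap S s E z = inv s \<otimes> (s \<otimes> z)"
        using commutes[OF z] aut.centre_in_E[OF z] zc s by (simp add: cmap_def S.m_assoc)
      then show ?thesis using zc s by simp
    qed
    have "cmap S s E ` E \<subseteq> E" using normal.inv_op_closed1[OF E_normal s] by (auto simp: cmap_def)
    then have "cmap S s E \<in> aut.central_automorphisms"
      using aut_S_subset_central s by (auto simp: aut_S_def hom_S_def)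
    moreover have "cmap S s E \<in> aut.centre_fixing_automorphisms"
      using cmap_in_F_E_E[OF s] fixes_centre by (simp add: aut.centre_fixing_automorphisms_def)
    ultimately have "cmap S s E \<in> inn S E" using central_centre_fixing_subset_inn by blast
    then obtain e where e: "e \<in> E" "cmap S s E = cmap S e E" unfolding inn_def by blast
    have "s \<otimes> inv e \<in> centraliser S E"
      by (rule S.centraliser_if_cmap_eq[OF subgroup.subset[OF subgroup_E] s E_carrier[OF e(1)] e(2)])
    then have "s \<otimes> inv e \<otimes> e \<in> E"
      using centraliser_subset subgroup.m_closed[OF subgroup_E _ e(1)] by blast
    then show "s \<in> E" using s E_carrier[OF e(1)] by (simp add: S.m_assoc)
  qed
qed

end

theorem mainTheorem18:
  fixes p :: nat and S :: "'a monoid" and F :: "'a fusion" and E :: "'a set"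
  assumes "Factorial_Ring.prime p"
    and "p_group p S"
    and "nilpotency_class S 2"
    and "saturated p S F"
    and "essential p S F E"
  shows "E \<lhd> S \<and>
         action_commutator S (O_p'_upper p (aut_F F E)) E \<subseteq> centre S E \<and>
         E = centraliser S (centre S E)"
proof -
  interpret essential_subgroup_class_two p S F E using assms by unfold_locales
  show ?thesis using E_normal action_commutator_subset_centre centraliser_centre by simp
qed

end
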